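(* Let $q=8m+3$ be a prime power ($m\ge1$), and let $I$, $E_0,E_1,E_2,E_3$ be as in the context. Then in $\mathbb{Z}[(\mathbb{F}_{q^2},+)]$, $$E_0E_1^{(-1)}+E_1E_0^{(-1)}+E_2E_3^{(-1)}+E_3E_2^{(-1)}=\sum_{h=0,1}\sum_{i,j\in I}\Big(C_{i+h}^{(8,q^2)}\big(C_{j+2+h}^{(8,q^2)}\big)^{(-1)}+C_{i+2+h}^{(8,q^2)}\big(C_{j+h}^{(8,q^2)}\big)^{(-1)}\Big)+8m(4m+1)\cdot 0_{\mathbb{F}_{q^2}}+m(28m+5)\,\mathbb{F}_{q^2}^\ast.$$
   Context: Let $\omega$ be a primitive element of $\mathbb{F}_{q^2}$, $C_i^{(N,q^2)}=\omega^i\langle\omega^N\rangle$ for $N\mid q^2-1$ (index mod $N$), and $L_i=C_i^{(q+1,q^2)}$ (index mod $q+1$). Let $I\subseteq\{0,1,\dots,7\}$ with $|I|=3$ and $I\cap\{x+4\bmod 8:x\in I\}=\emptyset$; let $y$ be the unique element of $I$ whose parity differs from that of the other two. Let $J_1=\{y+2+4i\bmod (q+1):0\le i\le m-1\}$ and $J_2=\{y+4i\bmod(q+1):0\le i\le m-1\}$. Define $E_0=\bigcup_{i\in I}C_i^{(8,q^2)}\cup\bigcup_{i\in J_1}L_i$, $E_1=\bigcup_{i\in I}C_{i+2}^{(8,q^2)}\cup\bigcup_{i\in J_2}L_i$, $E_2=\bigcup_{i\in I}C_{i+1}^{(8,q^2)}\cup\bigcup_{i\in J_1}L_{i+1}$,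 $E_3=\bigcup_{i\in I}C_{i+3}^{(8,q^2)}\cup\bigcup_{i\in J_2}L_{i+1}$. Subsets are identified with group ring elements $\sum_{x\in X}x$, $X^{(-1)}=\{-x:x\in X\}$, $\mathbb{F}_{q^2}^\ast=\mathbb{F}_{q^2}\setminus\{0\}$, and $0_{\mathbb{F}_{q^2}}$ is the identity of the group ring. *)

theory Defs
  imports Main "HOL-Computational_Algebra.Primes"
begin

definition primitive_elem :: "'a::{finite,field} \<Rightarrow> bool" where
  "primitive_elem \<omega> \<longleftrightarrow> \<omega> \<noteq> 0 \<and> (\<forall>x::'a. x \<noteq> 0 \<longrightarrow> (\<exists>k::nat. \<omega> ^ k = x))"

text \<open>Cyclotomic class C_i^{(N)} = omega^i <omega^N> (index automatically mod N).\<close>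
definition cyc :: "'a::field \<Rightarrow> nat \<Rightarrow> nat \<Rightarrow> 'a set" where
  "cyc \<omega> N i = {\<omega> ^ (i + N * k) | k. True}"

text \<open>Group ring Z[(F,+)]: elements are coefficient functions F => int.\<close>
definition gr_set :: "'a set \<Rightarrow> 'a \<Rightarrow> int" where
  "gr_set X = (\<lambda>z. if z \<in> X then 1 else 0)"

definition gr_mult :: "('a::{finite,ab_group_add} \<Rightarrow> int) \<Rightarrow> ('a \<Rightarrow> int) \<Rightarrow> 'a \<Rightarrow> int" where
  "gr_mult f g = (\<lambda>z. \<Sum>x\<in>UNIV. f x * g (z - x))"

definition gr_inv :: "('a::ab_group_add \<Rightarrow> int) \<Rightarrow> 'a \<Rightarrow> int" where
  "gr_inv f = (\<lambda>z. f (- z))"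

end

theory Submission
  imports Defs "HOL-Number_Theory.Residues"
begin

text \<open>
  Membership of a nonzero element in a cyclotomic class is a congruence on its discrete logarithm
  to the base \<open>\<omega>\<close>. For \<open>N = q + 1\<close>, the class \<open>L\<^sub>k\<close> together with \<open>0\<close> is the
  \<open>GF(q)\<close>-line \<open>\<omega>\<^sup>k GF(q)\<close> of \<open>GF(q\<^sup>2)\<close>. Two distinct lines meet only in \<open>0\<close>, so by
  counting they span \<open>GF(q\<^sup>2)\<close>, and every \<open>z\<close> has exactly one decomposition \<open>z = x - x'\<close>
  along two given distinct lines. This determines the difference counts of two lines and, by
  grouping lines, those of a class of order 4 against a line.

  Expanding the products \<open>E\<^sub>i E\<^sub>j\<^sup>(\<^sup>-\<^sup>1\<^sup>)\<close>, the terms between the order-8 parts give the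
  double sum of the statement. The mixed terms come in pairs \<open>A B\<^sup>(\<^sup>-\<^sup>1\<^sup>) + B A\<^sup>(\<^sup>-\<^sup>1\<^sup>)\<close>,
  with \<open>A\<close> a union of classes \<open>C\<^sub>i\<close> of order 8 and \<open>B\<close> a union of lines. Since
  \<open>q \<equiv> 3 (mod 8)\<close>, negation fixes every line and maps \<open>C\<^sub>i\<close> to \<open>C\<^sub>i\<^sub>+\<^sub>4\<close>, so such a
  pair equals \<open>(A \<union> -A) B\<^sup>(\<^sup>-\<^sup>1\<^sup>)\<close>; and \<open>A \<union> -A\<close> consists of all nonzero elements outside
  one class of order 4, because the residues modulo 4 of \<open>I\<close> are exactly those different from
  \<open>y + 2\<close>. Adding up these counts and the counts between lines gives the constants
  \<open>8m(4m + 1)\<close> and \<open>m(28m + 5)\<close>.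
\<close>

lemma card_residue_class:
  fixes M N r :: nat
  assumes "N dvd M" and "r < N"
  shows "card {e. e < M \<and> e mod N = r} = M div N"
proof -
  have "{e. e < M \<and> e mod N = r} = (\<lambda>t. N * t + r) ` {..<M div N}"
  proof (intro Set.set_eqI iffI)
    fix e assume "e \<in> {e. e < M \<and> e mod N = r}"
    then have "e = N * (e div N) + r" and "e div N < M div N"
      using assms by (auto simp: div_less_iff_less_mult)
    then show "e \<in> (\<lambda>t. N * t + r) ` {..<M div N}"
      by blast
  next
    fix e assume "e \<in> (\<lambda>t. N * t + r) ` {..<M div N}"
    then obtain t where "t < M div N" and e: "e = N * t + r"
      by blast
    then have "N * (t + 1) \<le> N * (M div N)"
      by (intro mult_le_mono2) simp
    then have "N * t + N \<le> M"
      using assms(1) by simp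
    then show "e \<in> {e. e < M \<and> e mod N = r}"
      using assms(2) e by simp
  qed
  moreover have "inj_on (\<lambda>t. N * t + r) {..<M div N}"
    using assms(2) by (intro inj_onI) simp
  ultimately show ?thesis
    by (simp add: card_image)
qed

lemma sum_lessThan_4: "(\<Sum>c<(4::nat). g c) = g 0 + g 1 + g 2 + g 3"
  by (simp add: lessThan_nat_numeral ac_simps)

lemma double_sum_one_minus:
  fixes f g :: "nat \<Rightarrow> int"
  shows "(\<Sum>t<n. \<Sum>t'<n. 1 - f t - g t') = int n * int n - int n * sum f {..<n} - int n * sum g {..<n}"
  by (simp add: sum_subtractf sum_distrib_left right_diff_distrib)

section \<open>Difference counts in the group ring\<close>

definition diff_count :: "'a::{finite,ab_group_add} set \<Rightarrow> 'a set \<Rightarrow> 'a \<Rightarrow> nat" where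
  "diff_count X Y z = card {x \<in> X. x - z \<in> Y}"

lemma gr_mult_gr_set_gr_inv:
  "gr_mult (gr_set X) (gr_inv (gr_set Y)) z = int (diff_count X Y z)"
proof -
  have "gr_mult (gr_set X) (gr_inv (gr_set Y)) z = (\<Sum>x\<in>UNIV. of_bool (x \<in> {x \<in> X. x - z \<in> Y}))"
    unfolding gr_mult_def gr_inv_def gr_set_def by (intro sum.cong) auto
  then show ?thesis
    by (simp add: diff_count_def)
qed

lemma diff_count_Un_left:
  "X1 \<inter> X2 = {} \<Longrightarrow> diff_count (X1 \<union> X2) Y z = diff_count X1 Y z + diff_count X2 Y z"
  unfolding diff_count_def by (subst card_Un_disjoint[symmetric]) (auto intro!: arg_cong[where f = card])

lemma diff_count_Un_right:
  "Y1 \<inter> Y2 = {} \<Longrightarrow> diff_count X (Y1 \<union> Y2) z = diff_count X Y1 z + diff_count X Y2 z"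
  unfolding diff_count_def by (subst card_Un_disjoint[symmetric]) (auto intro!: arg_cong[where f = card])

lemma diff_count_UN_left:
  assumes "finite A" and "\<forall>i\<in>A. \<forall>j\<in>A. i \<noteq> j \<longrightarrow> X i \<inter> X j = {}"
  shows "diff_count (\<Union>i\<in>A. X i) Y z = (\<Sum>i\<in>A. diff_count (X i) Y z)"
proof -
  have "{x \<in> (\<Union>i\<in>A. X i). x - z \<in> Y} = (\<Union>i\<in>A. {x \<in> X i. x - z \<in> Y})"
    by auto
  then show ?thesis
    using assms unfolding diff_count_def
    by (simp, subst card_UN_disjoint) auto
qed

lemma diff_count_UN_right:
  assumes "finite A" and "\<forall>i\<in>A. \<forall>j\<in>A. i \<noteq> j \<longrightarrow> Y i \<inter> Y j = {}"
  shows "diff_count X (\<Union>i\<in>A. Y i) z = (\<Sum>i\<in>A. diff_count X (Y i) z)"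
proof -
  have "{x \<in> X. x - z \<in> (\<Union>i\<in>A. Y i)} = (\<Union>i\<in>A. {x \<in> X. x - z \<in> Y i})"
    by auto
  then show ?thesis
    using assms unfolding diff_count_def
    by (simp, subst card_UN_disjoint) auto
qed

lemma diff_count_UNIV_minus_zero:
  "diff_count (UNIV - {0}) Y z = card Y - of_bool (- z \<in> Y)"
proof -
  have "bij_betw (\<lambda>x. x - z) {x \<in> UNIV - {0}. x - z \<in> Y} (Y - {- z})"
    by (rule bij_betw_byWitness[where f' = "\<lambda>u. u + z"]) (auto simp: add_eq_0_iff)
  then show ?thesis
    unfolding diff_count_def by (simp add: bij_betw_same_card card_Diff_singleton_if)
qed

lemma diff_count_swap:
  "diff_count Y X z = diff_count (uminus -` X) (uminus -` Y) z"
proof -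
  have "bij_betw (\<lambda>x. z - x) {x \<in> Y. x - z \<in> X} {u \<in> uminus -` X. u - z \<in> uminus -` Y}"
    by (rule bij_betw_byWitness[where f' = "\<lambda>u. z - u"]) auto
  then show ?thesis
    unfolding diff_count_def by (rule bij_betw_same_card)
qed

lemma diff_count_Un_Un:
  assumes "X1 \<inter> X2 = {}" and "Y1 \<inter> Y2 = {}"
  shows "diff_count (X1 \<union> X2) (Y1 \<union> Y2) z =
    diff_count X1 Y1 z + diff_count X1 Y2 z + diff_count X2 Y1 z + diff_count X2 Y2 z"
  by (simp add: diff_count_Un_left[OF assms(1)] diff_count_Un_right[OF assms(2)])

section \<open>Cyclotomic classes\<close>

lemma power_card_minus_one:
  fixes x :: "'a::{finite,field}"
  assumes "x \<noteq> 0"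
  shows "x ^ (card (UNIV :: 'a set) - 1) = 1"
proof -
  have "(\<Prod>y\<in>UNIV-{0}. x * y) = x ^ card (UNIV - {0::'a}) * \<Prod>(UNIV - {0})"
    by (simp add: prod.distrib)
  also have "(\<Prod>y\<in>UNIV-{0}. x * y) = \<Prod>(UNIV - {0::'a})"
    by (rule prod.reindex_bij_witness[of _ "\<lambda>y. y / x" "\<lambda>y. x * y"]) (use assms in auto)
  finally show ?thesis
    by (simp add: card_Diff_singleton)
qed

lemma image_mult_cyc: "(*) (\<omega> ^ a) ` cyc \<omega> N i = cyc \<omega> N (i + a)"
proof -
  have "cyc \<omega> N j = range (\<lambda>k. \<omega> ^ (j + N * k))" for j
    by (simp add: cyc_def full_SetCompr_eq)
  then show ?thesis
    by (simp add: image_image flip: power_add) (simp add: ac_simps)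
qed

lemma cyc_subset_cyc_dvd: "M dvd N \<Longrightarrow> cyc \<omega> N i \<subseteq> cyc \<omega> M i"
  unfolding cyc_def by (force simp: mult.assoc)

lemma cyc_eq_Un_cyc_double: "cyc \<omega> N i = cyc \<omega> (2 * N) i \<union> cyc \<omega> (2 * N) (i + N)"
proof (intro Set.set_eqI iffI)
  fix x
  assume "x \<in> cyc \<omega> N i"
  then obtain k where x: "x = \<omega> ^ (i + N * k)"
    by (auto simp: cyc_def)
  show "x \<in> cyc \<omega> (2 * N) i \<union> cyc \<omega> (2 * N) (i + N)"
  proof (cases "even k")
    case True
    then obtain k' where "k = 2 * k'" ..
    then have "x = \<omega> ^ (i + 2 * N * k')"
      using x by (simp add: ac_simps)
    then show ?thesis
      by (auto simp: cyc_def)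
  next
    case False
    then obtain k' where "k = 2 * k' + 1"
      by (rule oddE)
    then have "x = \<omega> ^ (i + N + 2 * N * k')"
      using x by (simp add: algebra_simps)
    then show ?thesis
      by (auto simp: cyc_def)
  qed
next
  fix x
  assume "x \<in> cyc \<omega> (2 * N) i \<union> cyc \<omega> (2 * N) (i + N)"
  then obtain k where "x = \<omega> ^ (i + N * (2 * k)) \<or> x = \<omega> ^ (i + N * (2 * k + 1))"
    by (auto simp: cyc_def algebra_simps)
  then show "x \<in> cyc \<omega> N i"
    unfolding cyc_def by blast
qed

locale primitive_root =
  fixes \<omega> :: "'a::{finite,field}" and n :: nat
  assumes primitive: "primitive_elem \<omega>"
    and card_UNIV: "card (UNIV :: 'a set) = Suc n"
begin

lemma power_n_eq_1: "(x :: 'a) \<noteq> 0 \<Longrightarrow> x ^ n = 1"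
  using power_card_minus_one[of x] card_UNIV by simp

lemma primitive_nonzero: "\<omega> \<noteq> 0"
  using primitive by (simp add: primitive_elem_def)

lemma n_pos: "0 < n"
proof -
  have "card {0, 1 :: 'a} \<le> card (UNIV :: 'a set)"
    by (rule card_mono) simp_all
  then show ?thesis
    by (simp add: card_UNIV)
qed

lemma power_mod_n: "\<omega> ^ (a mod n) = \<omega> ^ a"
proof -
  have "\<omega> ^ a = (\<omega> ^ n) ^ (a div n) * \<omega> ^ (a mod n)"
    by (simp flip: power_mult power_add)
  then show ?thesis
    by (simp add: power_n_eq_1 primitive_nonzero)
qed

lemma image_power: "(^) \<omega> ` {..<n} = UNIV - {0}"
proof
  show "(^) \<omega> ` {..<n} \<subseteq> UNIV - {0}"
    using primitive_nonzero by auto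
  show "UNIV - {0} \<subseteq> (^) \<omega> ` {..<n}"
  proof
    fix x :: 'a
    assume "x \<in> UNIV - {0}"
    then obtain k where "\<omega> ^ k = x"
      using primitive by (auto simp: primitive_elem_def)
    then have "x = \<omega> ^ (k mod n)" and "k mod n < n"
      using power_mod_n n_pos by simp_all
    then show "x \<in> (^) \<omega> ` {..<n}"
      by blast
  qed
qed

lemma power_eq_power_iff: "\<omega> ^ a = \<omega> ^ b \<longleftrightarrow> a mod n = b mod n"
proof -
  have "inj_on ((^) \<omega>) {..<n}"
    by (rule eq_card_imp_inj_on) (simp_all add: image_power card_Diff_singleton card_UNIV)
  then have "\<omega> ^ (a mod n) = \<omega> ^ (b mod n) \<longleftrightarrow> a mod n = b mod n"
    using n_pos by (auto dest: inj_onD)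
  then show ?thesis
    by (simp add: power_mod_n)
qed

lemma power_eq_1_iff: "\<omega> ^ a = 1 \<longleftrightarrow> n dvd a"
  using power_eq_power_iff[of a 0] by (simp add: dvd_eq_mod_eq_0)

text \<open>\<open>dlog x\<close> is determined only modulo \<open>n\<close>, and is arbitrary for \<open>x = 0\<close>.\<close>

definition dlog :: "'a \<Rightarrow> nat" where
  "dlog x = (SOME e. \<omega> ^ e = x)"

lemma power_dlog: "x \<noteq> 0 \<Longrightarrow> \<omega> ^ dlog x = x"
  unfolding dlog_def using primitive by (auto simp: primitive_elem_def intro: someI_ex)

lemma zero_notin_cyc: "0 \<notin> cyc \<omega> N i"
  using primitive_nonzero by (auto simp: cyc_def)

lemma power_mem_cyc_iff:
  assumes "N dvd n"
  shows "\<omega> ^ e \<in> cyc \<omega> N i \<longleftrightarrow> e mod N = i mod N"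
proof
  assume "\<omega> ^ e \<in> cyc \<omega> N i"
  then obtain k where "e mod n = (i + N * k) mod n"
    by (auto simp: cyc_def power_eq_power_iff)
  then have "e mod N = (i + N * k) mod N"
    using assms by (metis mod_mod_cancel)
  then show "e mod N = i mod N"
    by simp
next
  assume e: "e mod N = i mod N"
  from assms obtain c where "n = N * c"
    by (elim dvdE)
  then have "(e + n * i) mod N = i mod N"
    using e by (simp add: mult.assoc)
  moreover have "i \<le> e + n * i"
    using n_pos by (metis Suc_leI mult_le_mono1 mult_1 trans_le_add2 One_nat_def)
  ultimately obtain k where k: "e + n * i = i + N * k"
    by (rule mod_eq_nat1E)
  have "\<omega> ^ e = \<omega> ^ (e + n * i)"
    by (simp add: power_eq_power_iff)
  then show "\<omega> ^ e \<in> cyc \<omega> N i"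
    unfolding k cyc_def by blast
qed

lemma mem_cyc_iff: "N dvd n \<Longrightarrow> x \<in> cyc \<omega> N i \<longleftrightarrow> x \<noteq> 0 \<and> dlog x mod N = i mod N"
  by (metis power_dlog power_mem_cyc_iff zero_notin_cyc)

lemma cyc_cong: "N dvd n \<Longrightarrow> i mod N = j mod N \<Longrightarrow> cyc \<omega> N i = cyc \<omega> N j"
  by (auto simp: mem_cyc_iff)

lemma cyc_disjoint: "N dvd n \<Longrightarrow> i mod N \<noteq> j mod N \<Longrightarrow> cyc \<omega> N i \<inter> cyc \<omega> N j = {}"
  by (auto simp: mem_cyc_iff)

lemma cyc_disjoint_less: "N dvd n \<Longrightarrow> i < N \<Longrightarrow> j < N \<Longrightarrow> i \<noteq> j \<Longrightarrow> cyc \<omega> N i \<inter> cyc \<omega> N j = {}"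
  by (simp add: cyc_disjoint)

lemma mem_cyc_add_iff: "x \<in> cyc \<omega> N (i + a) \<longleftrightarrow> x / \<omega> ^ a \<in> cyc \<omega> N i"
proof -
  have "x \<in> (*) u ` S \<longleftrightarrow> x / u \<in> S" if "u \<noteq> 0" for u and S :: "'a set"
    using that by (auto intro!: image_eqI[where x = "x / u"])
  then show ?thesis
    using primitive_nonzero by (simp flip: image_mult_cyc)
qed

lemma cyc_eq_UN_finer:
  assumes "M dvd N" and "N dvd n"
  shows "cyc \<omega> M r = (\<Union>j \<in> {j. j < N \<and> j mod M = r mod M}. cyc \<omega> N j)"
proof -
  have M: "M dvd n"
    using assms by (rule dvd_trans)
  have "N \<noteq> 0"
    using assms(2) n_pos by auto
  have "x \<in> cyc \<omega> M r \<longleftrightarrow> (\<exists>j. j < N \<and> j mod M = r mod M \<and> x \<in> cyc \<omega> N j)" for x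
  proof
    assume "x \<in> cyc \<omega> M r"
    then show "\<exists>j. j < N \<and> j mod M = r mod M \<and> x \<in> cyc \<omega> N j"
      using assms(1) \<open>N \<noteq> 0\<close>
      by (intro exI[of _ "dlog x mod N"]) (auto simp: mem_cyc_iff[OF M] mem_cyc_iff[OF assms(2)] mod_mod_cancel)
  qed (use assms(1) in \<open>auto simp: mem_cyc_iff[OF M] mem_cyc_iff[OF assms(2)] mod_mod_cancel\<close>)
  then show ?thesis
    by blast
qed

lemma card_cyc:
  assumes "N dvd n"
  shows "card (cyc \<omega> N i) = n div N"
proof -
  have "N \<noteq> 0"
    using assms n_pos by auto
  have "cyc \<omega> N i = (^) \<omega> ` {e. e < n \<and> e mod N = i mod N}"
  proof (intro Set.set_eqI iffI)
    fix x assume "x \<in> cyc \<omega> N i"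
    then have "x = \<omega> ^ (dlog x mod n)" and "dlog x mod n \<in> {e. e < n \<and> e mod N = i mod N}"
      using assms n_pos by (simp_all add: mem_cyc_iff power_mod_n power_dlog mod_mod_cancel)
    then show "x \<in> (^) \<omega> ` {e. e < n \<and> e mod N = i mod N}"
      by (rule image_eqI)
  qed (use assms power_mem_cyc_iff in auto)
  moreover have "inj_on ((^) \<omega>) {e. e < n \<and> e mod N = i mod N}"
    by (auto intro!: inj_onI simp: power_eq_power_iff)
  ultimately show ?thesis
    using card_residue_class[OF assms, of "i mod N"] \<open>N \<noteq> 0\<close> by (simp add: card_image)
qed

lemma card_mem_cyc_add:
  assumes "N dvd n" and "x \<noteq> 0"
  shows "card {c. c < N \<and> x \<in> cyc \<omega> N (c + a)} = 1"
proof -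
  have "N \<noteq> 0"
    using assms n_pos by auto
  have "x / \<omega> ^ a \<noteq> 0"
    using assms primitive_nonzero by simp
  then have "{c. c < N \<and> x \<in> cyc \<omega> N (c + a)} = {dlog (x / \<omega> ^ a) mod N}"
    using \<open>N \<noteq> 0\<close> by (auto simp: mem_cyc_add_iff mem_cyc_iff[OF assms(1)])
  then show ?thesis
    by simp
qed

lemma power_half_n:
  assumes "even n"
  shows "\<omega> ^ (n div 2) = -1"
proof -
  have "(\<omega> ^ (n div 2))\<^sup>2 = \<omega> ^ n"
    using assms by (simp flip: power_mult)
  moreover have "\<omega> ^ (n div 2) \<noteq> \<omega> ^ 0"
    unfolding power_eq_power_iff using n_pos assms by auto
  ultimately show ?thesis
    by (simp add: power_n_eq_1 primitive_nonzero power2_eq_1_iff)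
qed

lemma uminus_vimage_cyc:
  assumes "even n"
  shows "uminus -` cyc \<omega> N i = cyc \<omega> N (i + n div 2)"
  using power_half_n[OF assms] by (auto simp: mem_cyc_add_iff)

end

section \<open>The lines \<open>\<omega>\<^sup>k GF(q)\<close> of \<open>GF(q\<^sup>2)\<close>\<close>

locale quadratic_primitive_root = primitive_root \<omega> n for \<omega> :: "'a::{finite,field}" and n +
  fixes q :: nat
  assumes prime_power: "\<exists>p k. prime p \<and> 1 \<le> k \<and> q = p ^ k"
    and card_UNIV_q: "card (UNIV :: 'a set) = q\<^sup>2"
begin

lemma two_le_q: "2 \<le> q"
proof -
  obtain p k where "prime p" and "1 \<le> k" and "q = p ^ k"
    using prime_power by blast
  then show ?thesis
    using prime_ge_2_nat[of p] self_le_power[of p k] by simp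
qed

lemma n_eq: "n = (q + 1) * (q - 1)"
proof -
  obtain r where "q = Suc r"
    using two_le_q by (cases q) simp_all
  then show ?thesis
    using card_UNIV card_UNIV_q by (simp add: power2_eq_square)
qed

lemma q_plus_one_dvd_n: "q + 1 dvd n"
  unfolding n_eq by (rule dvd_triv_left)

lemma power_q_diff: "(x - y :: 'a) ^ q = x ^ q - y ^ q"
proof -
  obtain p k where p: "prime p" and q: "q = p ^ k" and "1 \<le> k"
    using prime_power by blast
  have char: "prime CHAR('a)"
    by (intro prime_CHAR_semidom finite_imp_CHAR_pos) simp
  have "CHAR('a) dvd p ^ (2 * k)"
    using CHAR_dvd_CARD[where 'a = 'a] card_UNIV_q q by (simp add: power_mult mult.commute)
  then have "CHAR('a) = p"
    using char p prime_dvd_power primes_dvd_imp_eq by blast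
  then have "(x - y + y) ^ q = (x - y) ^ q + y ^ q"
    using freshmans_dream'[OF char] q by blast
  then show ?thesis
    by (simp add: algebra_simps)
qed

text \<open>\<open>fq_line k = \<omega>\<^sup>k GF(q)\<close>, whose nonzero part is the class \<open>L\<^sub>k = cyc \<omega> (q + 1) k\<close>.\<close>

definition fq_line :: "nat \<Rightarrow> 'a set" where
  "fq_line k = insert 0 (cyc \<omega> (q + 1) k)"

lemma mem_cyc_0_iff:
  assumes "x \<noteq> 0"
  shows "x \<in> cyc \<omega> (q + 1) 0 \<longleftrightarrow> x ^ q = x"
proof -
  have q: "q = Suc (q - 1)" and "0 < q - 1"
    using two_le_q by simp_all
  have "x ^ q = x \<longleftrightarrow> x ^ (q - 1) = 1"
    using assms by (subst q) simp
  also have "\<dots> \<longleftrightarrow> \<omega> ^ (dlog x * (q - 1)) = 1"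
    using power_dlog[OF assms] by (metis power_mult)
  also have "\<dots> \<longleftrightarrow> (q - 1) * (q + 1) dvd (q - 1) * dlog x"
    by (simp add: power_eq_1_iff n_eq ac_simps)
  also have "\<dots> \<longleftrightarrow> q + 1 dvd dlog x"
    using \<open>0 < q - 1\<close> by (rule nat_mult_dvd_cancel1)
  also have "\<dots> \<longleftrightarrow> x \<in> cyc \<omega> (q + 1) 0"
    using assms mem_cyc_iff[OF q_plus_one_dvd_n, of x 0] by (simp add: dvd_eq_mod_eq_0)
  finally show ?thesis
    by simp
qed

lemma mem_fq_line_iff: "x \<in> fq_line k \<longleftrightarrow> (x / \<omega> ^ k) ^ q = x / \<omega> ^ k"
proof (cases "x = 0")
  case True
  then show ?thesis
    using two_le_q by (simp add: fq_line_def)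
next
  case False
  then have "x \<in> fq_line k \<longleftrightarrow> x / \<omega> ^ k \<in> cyc \<omega> (q + 1) 0"
    using mem_cyc_add_iff[of x _ 0 k] by (simp add: fq_line_def)
  also have "\<dots> \<longleftrightarrow> (x / \<omega> ^ k) ^ q = x / \<omega> ^ k"
    using False primitive_nonzero by (intro mem_cyc_0_iff) simp
  finally show ?thesis .
qed

lemma zero_mem_fq_line: "0 \<in> fq_line k"
  by (simp add: fq_line_def)

lemma mem_fq_line_dlog_iff:
  assumes "x \<noteq> 0" and "k < q + 1"
  shows "x \<in> fq_line k \<longleftrightarrow> k = dlog x mod (q + 1)"
  using mem_cyc_iff[OF q_plus_one_dvd_n, of x k] assms by (auto simp: fq_line_def)

lemma fq_line_diff: "x \<in> fq_line k \<Longrightarrow> y \<in> fq_line k \<Longrightarrow> x - y \<in> fq_line k"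
  by (simp add: mem_fq_line_iff diff_divide_distrib power_q_diff)

lemma uminus_mem_fq_line: "- x \<in> fq_line k \<longleftrightarrow> x \<in> fq_line k"
  using fq_line_diff[OF zero_mem_fq_line, of x k] fq_line_diff[OF zero_mem_fq_line, of "- x" k] by auto

lemma card_cyc_line: "card (cyc \<omega> (q + 1) k) = q - 1"
proof -
  have "n div (q + 1) = q - 1"
    unfolding n_eq by (rule nonzero_mult_div_cancel_left) simp
  then show ?thesis
    using card_cyc[OF q_plus_one_dvd_n] by simp
qed

lemma card_fq_line: "card (fq_line k) = q"
  using card_cyc_line two_le_q zero_notin_cyc by (simp add: fq_line_def)

lemma fq_line_inter:
  "j mod (q + 1) \<noteq> k mod (q + 1) \<Longrightarrow> fq_line j \<inter> fq_line k = {0}"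
  using cyc_disjoint[OF q_plus_one_dvd_n] by (auto simp: fq_line_def)

lemma fq_lines_diff_unique:
  assumes "j mod (q + 1) \<noteq> k mod (q + 1)"
    and "x \<in> fq_line j" "x - z \<in> fq_line k" "x' \<in> fq_line j" "x' - z \<in> fq_line k"
  shows "x = x'"
proof -
  have "x - x' \<in> fq_line j"
    using assms(2,4) by (rule fq_line_diff)
  moreover have "(x - z) - (x' - z) \<in> fq_line k"
    using assms(3,5) by (rule fq_line_diff)
  ultimately have "x - x' \<in> fq_line j \<inter> fq_line k"
    by simp
  then show ?thesis
    using fq_line_inter[OF assms(1)] by simp
qed

lemma fq_lines_span:
  assumes "j mod (q + 1) \<noteq> k mod (q + 1)"
  shows "(\<lambda>(x, y). x - y) ` (fq_line j \<times> fq_line k) = UNIV"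
proof -
  have "inj_on (\<lambda>(x, y). x - y) (fq_line j \<times> fq_line k)"
  proof (rule inj_onI, clarify)
    fix a b c d
    assume ab: "a \<in> fq_line j" "b \<in> fq_line k" and cd: "c \<in> fq_line j" "d \<in> fq_line k"
      and eq: "a - b = c - d"
    from eq have "c - (a - b) = d"
      by simp
    then have "a = c"
      using fq_lines_diff_unique[OF assms, of a "a - b" c] ab cd by simp
    with eq show "a = c \<and> b = d"
      by simp
  qed
  then have "card ((\<lambda>(x, y). x - y) ` (fq_line j \<times> fq_line k)) = card (UNIV :: 'a set)"
    by (simp add: card_image card_cartesian_product card_fq_line card_UNIV_q power2_eq_square)
  then show ?thesis
    by (rule card_eq_UNIV_imp_eq_UNIV[rotated]) simp
qed

lemma fq_lines_unique_decomposition: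
  assumes "j mod (q + 1) \<noteq> k mod (q + 1)"
  shows "\<exists>!x. x \<in> fq_line j \<and> x - z \<in> fq_line k"
proof -
  have "z \<in> (\<lambda>(x, y). x - y) ` (fq_line j \<times> fq_line k)"
    using fq_lines_span[OF assms] by simp
  then obtain x y where "x \<in> fq_line j" and "y \<in> fq_line k" and "z = x - y"
    by auto
  then have "x \<in> fq_line j \<and> x - z \<in> fq_line k"
    by simp
  then show ?thesis
    using fq_lines_diff_unique[OF assms] by blast
qed

lemma diff_count_cyc_lines:
  assumes "j mod (q + 1) \<noteq> k mod (q + 1)"
  shows "diff_count (cyc \<omega> (q + 1) j) (cyc \<omega> (q + 1) k) z = of_bool (z \<notin> fq_line j \<and> z \<notin> fq_line k)"
proof -
  obtain a where a: "a \<in> fq_line j" "a - z \<in> fq_line k"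
    and unique: "\<And>x. x \<in> fq_line j \<Longrightarrow> x - z \<in> fq_line k \<Longrightarrow> x = a"
    using fq_lines_unique_decomposition[OF assms, of z] by blast
  have a_0: "a = 0 \<longleftrightarrow> z \<in> fq_line k"
  proof
    assume "a = 0"
    then show "z \<in> fq_line k"
      using a(2) uminus_mem_fq_line by simp
  next
    assume "z \<in> fq_line k"
    then have "0 - z \<in> fq_line k"
      by (simp add: uminus_mem_fq_line)
    from unique[OF zero_mem_fq_line this] show "a = 0" ..
  qed
  have a_z: "a = z \<longleftrightarrow> z \<in> fq_line j"
  proof
    assume "a = z"
    then show "z \<in> fq_line j"
      using a(1) by simp
  next
    assume "z \<in> fq_line j"
    then have "z = a"
      by (rule unique) (simp add: zero_mem_fq_line)
    then show "a = z" ..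
  qed
  have mem: "x \<in> cyc \<omega> (q + 1) i \<longleftrightarrow> x \<in> fq_line i \<and> x \<noteq> 0" for x i
    using zero_notin_cyc by (auto simp: fq_line_def)
  have "{x \<in> cyc \<omega> (q + 1) j. x - z \<in> cyc \<omega> (q + 1) k} = {a} - {0, z}"
  proof (rule Set.set_eqI)
    fix x
    have "x \<in> fq_line j \<and> x - z \<in> fq_line k \<longleftrightarrow> x = a"
      using a unique by blast
    then show "x \<in> {x \<in> cyc \<omega> (q + 1) j. x - z \<in> cyc \<omega> (q + 1) k} \<longleftrightarrow> x \<in> {a} - {0, z}"
      by (simp only: mem mem_Collect_eq) auto
  qed
  moreover have "card ({a} - {0, z}) = of_bool (a \<noteq> 0 \<and> a \<noteq> z)"
    by (cases "a = 0 \<or> a = z") auto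
  ultimately show ?thesis
    by (simp add: diff_count_def a_0 a_z)
qed

lemma uminus_vimage_cyc_line:
  assumes "odd q"
  shows "uminus -` cyc \<omega> (q + 1) k = cyc \<omega> (q + 1) k"
proof -
  have "even (q - 1)"
    using assms two_le_q by simp
  then obtain r where "q - 1 = 2 * r"
    by (rule evenE)
  then have half: "n = 2 * ((q + 1) * r)"
    by (simp add: n_eq)
  then have "(k + n div 2) mod (q + 1) = k mod (q + 1)"
    by (simp only: nonzero_mult_div_cancel_left zero_neq_numeral mod_mult_self2)
  then have "cyc \<omega> (q + 1) (k + n div 2) = cyc \<omega> (q + 1) k"
    by (rule cyc_cong[OF q_plus_one_dvd_n])
  moreover have "even n"
    using half by simp
  ultimately show ?thesis
    using uminus_vimage_cyc[of "q + 1" k] by simp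
qed

lemma card_fq_lines_avoiding:
  assumes "M dvd q + 1" and "z \<noteq> 0"
  shows "int (card {j. j < q + 1 \<and> j mod M = r mod M \<and> z \<notin> fq_line j}) =
    int ((q + 1) div M) - of_bool (z \<in> cyc \<omega> M r)"
proof -
  define J where "J = {j. j < q + 1 \<and> j mod M = r mod M}"
  define l where "l = dlog z mod (q + 1)"
  have M: "M dvd n"
    using assms(1) q_plus_one_dvd_n by (rule dvd_trans)
  have "{j. j < q + 1 \<and> j mod M = r mod M \<and> z \<notin> fq_line j} = J - {l}"
  proof (rule Set.set_eqI)
    fix j
    show "j \<in> {j. j < q + 1 \<and> j mod M = r mod M \<and> z \<notin> fq_line j} \<longleftrightarrow> j \<in> J - {l}"
      using mem_fq_line_dlog_iff[OF assms(2), of j] by (auto simp: J_def l_def)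
  qed
  moreover have "int (card (J - {l})) = int (card J) - of_bool (l \<in> J)"
  proof (cases "l \<in> J")
    case True
    moreover have "finite J"
      by (simp add: J_def)
    ultimately have "card J = Suc (card (J - {l}))"
      by (intro card.remove)
    then show ?thesis
      using True by simp
  qed simp
  moreover have "l \<in> J \<longleftrightarrow> z \<in> cyc \<omega> M r"
    using assms by (simp add: J_def l_def mem_cyc_iff[OF M] mod_mod_cancel)
  moreover have "M \<noteq> 0"
    using M n_pos by auto
  then have "card J = (q + 1) div M"
    unfolding J_def using card_residue_class[OF assms(1)] by simp
  ultimately show ?thesis
    by simp
qed

lemma diff_count_coarser_cyc_line:
  assumes "M dvd q + 1" and "r mod M \<noteq> k mod M"
  shows "int (diff_count (cyc \<omega> M r) (cyc \<omega> (q + 1) k) z) =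
    (if z \<in> fq_line k then 0 else int ((q + 1) div M) - of_bool (z \<in> cyc \<omega> M r))"
proof -
  define J where "J = {j. j < q + 1 \<and> j mod M = r mod M}"
  have "diff_count (cyc \<omega> M r) (cyc \<omega> (q + 1) k) z =
      (\<Sum>j\<in>J. diff_count (cyc \<omega> (q + 1) j) (cyc \<omega> (q + 1) k) z)"
    unfolding cyc_eq_UN_finer[OF assms(1) q_plus_one_dvd_n, of r] J_def[symmetric]
    by (rule diff_count_UN_left) (use cyc_disjoint_less[OF q_plus_one_dvd_n] in \<open>simp_all add: J_def\<close>)
  also have "\<dots> = (\<Sum>j\<in>J. of_bool (z \<notin> fq_line j \<and> z \<notin> fq_line k))"
  proof (intro sum.cong refl diff_count_cyc_lines notI)
    fix j assume "j \<in> J" and "j mod (q + 1) = k mod (q + 1)"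
    then have "j mod M = k mod M"
      using assms(1) by (metis mod_mod_cancel)
    with \<open>j \<in> J\<close> assms(2) show False
      by (simp add: J_def)
  qed
  finally have count: "diff_count (cyc \<omega> M r) (cyc \<omega> (q + 1) k) z =
      card {j. j < q + 1 \<and> j mod M = r mod M \<and> z \<notin> fq_line j \<and> z \<notin> fq_line k}"
    by (simp add: J_def Int_def conj_assoc)
  show ?thesis
  proof (cases "z \<in> fq_line k")
    case False
    then have "z \<noteq> 0"
      using zero_mem_fq_line by auto
    with False show ?thesis
      using count card_fq_lines_avoiding[OF assms(1) \<open>z \<noteq> 0\<close>, of r] by simp
  qed (use count in simp)
qed

end

locale index_triple =
  fixes I :: "nat set" and y :: nat
  assumes I_subset: "I \<subseteq> {0..7}" and card_I: "card I = 3"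
    and I_disjoint_shift: "I \<inter> {(x + 4) mod 8 | x. x \<in> I} = {}"
    and y_in_I: "y \<in> I" and y_parity: "\<forall>x\<in>I - {y}. odd x \<noteq> odd y"
begin

lemma finite_I: "finite I"
  using I_subset finite_subset by blast

lemma less_8: "i \<in> I \<Longrightarrow> i < 8"
  using I_subset by auto

lemma mod_4_neq: "i \<in> I \<Longrightarrow> i mod 4 \<noteq> (y + 2) mod 4"
proof
  assume "i \<in> I" and eq: "i mod 4 = (y + 2) mod 4"
  then have "i mod 2 = (y + 2) mod 2"
    using mod_mod_cancel[of 2 4 i] mod_mod_cancel[of 2 4 "y + 2"] by simp
  then have "odd i = odd y"
    by (simp add: odd_iff_mod_2_eq_one)
  then have "i = y"
    using y_parity \<open>i \<in> I\<close> by blast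
  moreover have "y mod 4 \<noteq> (y + 2) mod 4"
    by presburger
  ultimately show False
    using eq by simp
qed

lemma inj_on_mod_4: "inj_on (\<lambda>i. i mod 4) I"
proof -
  have "i = j" if i: "i \<in> I" and j: "j \<in> I" and eq: "i mod 4 = j mod 4" and "i \<le> j" for i j
  proof -
    obtain s where j_eq: "j = i + 4 * s"
      using eq \<open>i \<le> j\<close> by (rule mod_eq_nat2E)
    with less_8[OF j] have "s < 2"
      by linarith
    moreover have "s \<noteq> 1"
    proof
      assume "s = 1"
      with j_eq less_8[OF j] have "j = (i + 4) mod 8"
        by simp
      with i j I_disjoint_shift show False
        by blast
    qed
    ultimately show ?thesis
      using j_eq by (simp add: less_2_cases_iff)
  qed
  then show ?thesis
    by (intro inj_onI) (metis nat_le_linear)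
qed

lemma image_mod_4: "(\<lambda>i. i mod 4) ` I = {..<4} - {(y + 2) mod 4}"
proof (rule card_subset_eq)
  show "(\<lambda>i. i mod 4) ` I \<subseteq> {..<4} - {(y + 2) mod 4}"
    using mod_4_neq by auto
  show "card ((\<lambda>i. i mod 4) ` I) = card ({..<4} - {(y + 2) mod 4})"
    using card_image[OF inj_on_mod_4] card_I by simp
qed simp

end

section \<open>The case \<open>q \<equiv> 3 (mod 8)\<close>\<close>

locale q3mod8_setting =
  quadratic_primitive_root \<omega> n q + index_triple I y
  for \<omega> :: "'a::{finite,field}" and n q I y +
  fixes m :: nat
  assumes q_eq: "q = 8 * m + 3"
begin

lemma odd_q: "odd q"
  by (simp add: q_eq)

lemma four_dvd_q_plus_one: "4 dvd q + 1"
proof -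
  have "q + 1 = 4 * (2 * m + 1)"
    by (simp add: q_eq)
  then show ?thesis
    by simp
qed

lemma n_eq_m: "n = 2 * (8 * (4 * m * m + 3 * m) + 4)"
  by (simp add: n_eq q_eq algebra_simps)

lemma eight_dvd_n: "8 dvd n"
proof -
  have "n = 8 * (2 * (4 * m * m + 3 * m) + 1)"
    by (simp add: n_eq_m)
  then show ?thesis
    by simp
qed

lemma four_dvd_n: "4 dvd n"
  using eight_dvd_n by (rule dvd_trans[rotated]) simp

lemma uminus_vimage_cyc8: "uminus -` cyc \<omega> 8 i = cyc \<omega> 8 (i + 4)"
proof -
  have "n div 2 = 8 * (4 * m * m + 3 * m) + 4"
    unfolding n_eq_m by simp
  then have "(n div 2) mod 8 = 4"
    by (simp only: mod_mult_self4) simp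
  then have "(i + n div 2) mod 8 = (i + 4) mod 8"
    by (metis mod_add_right_eq)
  then have "cyc \<omega> 8 (i + n div 2) = cyc \<omega> 8 (i + 4)"
    by (rule cyc_cong[OF eight_dvd_n])
  moreover have "even n"
    by (simp add: n_eq_m)
  ultimately show ?thesis
    using uminus_vimage_cyc[of 8 i] by simp
qed

lemma cyc4_eq_Un_cyc8: "cyc \<omega> 4 i = cyc \<omega> 8 i \<union> cyc \<omega> 8 (i + 4)"
  using cyc_eq_Un_cyc_double[of \<omega> 4 i] by simp

lemma UN_cyc4_index_triple: "(\<Union>i\<in>I. cyc \<omega> 4 (i + s)) = UNIV - {0} - cyc \<omega> 4 (y + 2 + s)"
proof (rule Set.set_eqI)
  fix x
  have "x \<in> (\<Union>i\<in>I. cyc \<omega> 4 (i + s)) \<longleftrightarrow> x / \<omega> ^ s \<in> (\<Union>i\<in>I. cyc \<omega> 4 i)"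
    by (simp add: mem_cyc_add_iff)
  also have "\<dots> \<longleftrightarrow> x / \<omega> ^ s \<noteq> 0 \<and> dlog (x / \<omega> ^ s) mod 4 \<in> (\<lambda>i. i mod 4) ` I"
    by (auto simp: mem_cyc_iff[OF four_dvd_n])
  also have "\<dots> \<longleftrightarrow> x / \<omega> ^ s \<noteq> 0 \<and> dlog (x / \<omega> ^ s) mod 4 \<noteq> (y + 2) mod 4"
    by (simp add: image_mod_4)
  also have "\<dots> \<longleftrightarrow> x \<in> UNIV - {0} - cyc \<omega> 4 (y + 2 + s)"
    using mem_cyc_add_iff[of x 4 "y + 2" s] primitive_nonzero by (auto simp: mem_cyc_iff[OF four_dvd_n])
  finally show "x \<in> (\<Union>i\<in>I. cyc \<omega> 4 (i + s)) \<longleftrightarrow> x \<in> UNIV - {0} - cyc \<omega> 4 (y + 2 + s)" .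
qed

definition cyc_part :: "nat \<Rightarrow> 'a set" where
  "cyc_part s = (\<Union>i\<in>I. cyc \<omega> 8 (i + s))"

definition line_part :: "nat \<Rightarrow> 'a set" where
  "line_part c = (\<Union>t<m. cyc \<omega> (q + 1) (y + c + 4 * t))"

definition line_hits :: "'a \<Rightarrow> nat \<Rightarrow> int" where
  "line_hits z c = (\<Sum>t<m. of_bool (z \<in> cyc \<omega> (q + 1) (y + c + 4 * t)))"

lemma cyc8_disjoint:
  assumes "i \<in> I" and "j \<in> I" and "i \<noteq> j"
  shows "cyc \<omega> 8 (i + s) \<inter> cyc \<omega> 8 (j + s) = {}"
proof (rule cyc_disjoint[OF eight_dvd_n])
  show "(i + s) mod 8 \<noteq> (j + s) mod 8"
    using assms less_8 cong_add_rcancel_nat[of i s j 8] by (simp add: cong_def)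
qed

lemma cyc_part_disjoint_shift: "cyc_part s \<inter> cyc_part (s + 4) = {}"
proof -
  have "(i + s) mod 8 \<noteq> (j + (s + 4)) mod 8" if "i \<in> I" and "j \<in> I" for i j
  proof
    assume "(i + s) mod 8 = (j + (s + 4)) mod 8"
    then have "[i + s = (j + 4) + s] (mod 8)"
      by (simp add: cong_def ac_simps)
    then have "[i = j + 4] (mod 8)"
      by (rule cong_add_rcancel_nat[THEN iffD1])
    then have "i = (j + 4) mod 8"
      using less_8[OF that(1)] by (simp add: cong_def)
    with that I_disjoint_shift show False
      by blast
  qed
  then show ?thesis
    unfolding cyc_part_def using cyc_disjoint[OF eight_dvd_n] by blast
qed

lemma cyc_part_Un_shift: "cyc_part s \<union> cyc_part (s + 4) = UNIV - {0} - cyc \<omega> 4 (y + 2 + s)"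
proof -
  have "cyc_part s \<union> cyc_part (s + 4) = (\<Union>i\<in>I. cyc \<omega> 4 (i + s))"
    unfolding cyc_part_def cyc4_eq_Un_cyc8 by (simp add: UN_Un_distrib add.assoc)
  then show ?thesis
    by (simp add: UN_cyc4_index_triple)
qed

lemma uminus_vimage_cyc_part: "uminus -` cyc_part s = cyc_part (s + 4)"
  by (simp add: cyc_part_def vimage_UN uminus_vimage_cyc8 add.assoc)

lemma uminus_vimage_line_part: "uminus -` line_part c = line_part c"
  unfolding line_part_def vimage_UN uminus_vimage_cyc_line[OF odd_q] ..

lemma line_index_mod_neq:
  assumes "c < 4" "c' < 4" "t < m" "t' < m" and "(c, t) \<noteq> (c', t')"
  shows "(y + c + 4 * t) mod (q + 1) \<noteq> (y + c' + 4 * t') mod (q + 1)"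
proof -
  have "y < 8"
    using less_8 y_in_I .
  then have "y + c + 4 * t < q + 1" and "y + c' + 4 * t' < q + 1"
    using assms(1-4) by (simp_all add: q_eq)
  moreover have "c + 4 * t \<noteq> c' + 4 * t'"
  proof
    assume eq: "c + 4 * t = c' + 4 * t'"
    have "c = (c + 4 * t) mod 4" and "c' = (c' + 4 * t') mod 4"
      using assms(1,2) by simp_all
    with eq have "c = c'"
      by simp
    with eq assms(5) show False
      by simp
  qed
  ultimately show ?thesis
    by simp
qed

lemma line_part_subset: "line_part c \<subseteq> cyc \<omega> 4 (y + c)"
proof -
  have "cyc \<omega> (q + 1) (y + c + 4 * t) \<subseteq> cyc \<omega> 4 (y + c)" for t
  proof -
    have "cyc \<omega> (q + 1) (y + c + 4 * t) \<subseteq> cyc \<omega> 4 (y + c + 4 * t)"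
      by (rule cyc_subset_cyc_dvd[OF four_dvd_q_plus_one])
    also have "\<dots> = cyc \<omega> 4 (y + c)"
      by (rule cyc_cong[OF four_dvd_n]) simp
    finally show ?thesis .
  qed
  then show ?thesis
    by (auto simp: line_part_def)
qed

lemma cyc_part_line_part_disjoint:
  assumes "(s + 2) mod 4 = c mod 4"
  shows "cyc_part s \<inter> line_part c = {}"
proof -
  have "cyc_part s \<subseteq> UNIV - {0} - cyc \<omega> 4 (y + 2 + s)"
    using cyc_part_Un_shift by blast
  moreover have "cyc \<omega> 4 (y + c) = cyc \<omega> 4 (y + 2 + s)"
    using assms by (intro cyc_cong[OF four_dvd_n]) (metis add.assoc add.commute mod_add_right_eq)
  ultimately show ?thesis
    using line_part_subset by blast
qed

lemma line_disjoint:
  assumes "c < 4" "c' < 4" "t < m" "t' < m" and "(c, t) \<noteq> (c', t')"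
  shows "cyc \<omega> (q + 1) (y + c + 4 * t) \<inter> cyc \<omega> (q + 1) (y + c' + 4 * t') = {}"
  using cyc_disjoint[OF q_plus_one_dvd_n] line_index_mod_neq[OF assms] .

lemma diff_count_cyc_part_left:
  "diff_count (cyc_part s) Y z = (\<Sum>i\<in>I. diff_count (cyc \<omega> 8 (i + s)) Y z)"
  unfolding cyc_part_def using finite_I cyc8_disjoint by (blast intro: diff_count_UN_left)

lemma diff_count_cyc_part_right:
  "diff_count X (cyc_part s) z = (\<Sum>i\<in>I. diff_count X (cyc \<omega> 8 (i + s)) z)"
  unfolding cyc_part_def using finite_I cyc8_disjoint by (blast intro: diff_count_UN_right)

lemma diff_count_line_part_left:
  "c < 4 \<Longrightarrow> diff_count (line_part c) Y z = (\<Sum>t<m. diff_count (cyc \<omega> (q + 1) (y + c + 4 * t)) Y z)"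
  unfolding line_part_def using line_disjoint by (blast intro: diff_count_UN_left finite_lessThan)

lemma diff_count_line_part_right:
  "c < 4 \<Longrightarrow> diff_count X (line_part c) z = (\<Sum>t<m. diff_count X (cyc \<omega> (q + 1) (y + c + 4 * t)) z)"
  unfolding line_part_def using line_disjoint by (blast intro: diff_count_UN_right finite_lessThan)

lemma diff_count_cyc_part_cyc_part:
  "int (diff_count (cyc_part s) (cyc_part s') z) =
    (\<Sum>i\<in>I. \<Sum>j\<in>I. int (diff_count (cyc \<omega> 8 (i + s)) (cyc \<omega> 8 (j + s')) z))"
  by (simp add: diff_count_cyc_part_left, simp add: diff_count_cyc_part_right)

lemma diff_count_line_part_line_part:
  assumes "c < 4" "c' < 4" "c \<noteq> c'"
  shows "int (diff_count (line_part c) (line_part c') z) =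
    (if z = 0 then 0 else int m * int m - int m * line_hits z c - int m * line_hits z c')"
proof -
  let ?L = "\<lambda>c t. cyc \<omega> (q + 1) (y + c + 4 * t)"
  have "diff_count (line_part c) (line_part c') z = (\<Sum>t<m. \<Sum>t'<m. diff_count (?L c t) (?L c' t') z)"
    using assms by (simp add: diff_count_line_part_left, simp add: diff_count_line_part_right)
  also have "\<dots> = (\<Sum>t<m. \<Sum>t'<m. of_bool (z \<notin> fq_line (y + c + 4 * t) \<and> z \<notin> fq_line (y + c' + 4 * t')))"
    using assms by (intro sum.cong refl diff_count_cyc_lines line_index_mod_neq) auto
  finally have count: "int (diff_count (line_part c) (line_part c') z) =
      (\<Sum>t<m. \<Sum>t'<m. of_bool (z \<notin> fq_line (y + c + 4 * t) \<and> z \<notin> fq_line (y + c' + 4 * t')))"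
    by simp
  show ?thesis
  proof (cases "z = 0")
    case True
    then show ?thesis
      using count by (simp add: zero_mem_fq_line)
  next
    case False
    have "of_bool (z \<notin> fq_line (y + c + 4 * t) \<and> z \<notin> fq_line (y + c' + 4 * t')) =
        1 - of_bool (z \<in> ?L c t) - (of_bool (z \<in> ?L c' t') :: int)" if "t < m" "t' < m" for t t'
      using line_disjoint[of c c' t t'] assms that False by (auto simp: fq_line_def)
    then have "int (diff_count (line_part c) (line_part c') z) =
        (\<Sum>t<m. \<Sum>t'<m. 1 - of_bool (z \<in> ?L c t) - of_bool (z \<in> ?L c' t'))"
      unfolding count by simp
    also have "\<dots> = int m * int m - int m * line_hits z c - int m * line_hits z c'"
      unfolding line_hits_def by (rule double_sum_one_minus)
    finally show ?thesis
      using False by simp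
  qed
qed

lemma diff_count_complement_line:
  "int (diff_count (UNIV - {0} - cyc \<omega> 4 (k + 2)) (cyc \<omega> (q + 1) k) z) =
    (if z = 0 then 8 * int m + 2
     else 6 * int m + 1 + of_bool (z \<in> cyc \<omega> 4 (k + 2)) + 2 * int m * of_bool (z \<in> cyc \<omega> (q + 1) k))"
proof -
  let ?C = "cyc \<omega> 4 (k + 2)" and ?L = "cyc \<omega> (q + 1) k"
  have "diff_count ((UNIV - {0} - ?C) \<union> ?C) ?L z = diff_count (UNIV - {0} - ?C) ?L z + diff_count ?C ?L z"
    by (rule diff_count_Un_left) blast
  moreover have "(UNIV - {0} - ?C) \<union> ?C = UNIV - {0}"
    using zero_notin_cyc by blast
  ultimately have split: "diff_count (UNIV - {0} - ?C) ?L z = diff_count (UNIV - {0}) ?L z - diff_count ?C ?L z"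
    by simp
  have "- z \<in> ?L \<longleftrightarrow> z \<in> ?L"
    using uminus_vimage_cyc_line[OF odd_q, of k] by blast
  then have all: "int (diff_count (UNIV - {0}) ?L z) = 8 * int m + 2 - of_bool (z \<in> ?L)"
    using card_cyc_line[of k] by (simp add: diff_count_UNIV_minus_zero q_eq of_nat_diff)
  have "(k + 2) mod 4 \<noteq> k mod 4"
    by presburger
  moreover have "(q + 1) div 4 = 2 * m + 1"
    by (simp add: q_eq)
  ultimately have coarse: "int (diff_count ?C ?L z) = (if z \<in> fq_line k then 0 else 2 * int m + 1 - of_bool (z \<in> ?C))"
    using diff_count_coarser_cyc_line[OF four_dvd_q_plus_one, of "k + 2" k z] by simp
  have "?L \<inter> ?C = {}"
    using cyc_subset_cyc_dvd[OF four_dvd_q_plus_one, of \<omega> k] cyc_disjoint[OF four_dvd_n \<open>(k + 2) mod 4 \<noteq> k mod 4\<close>]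
    by blast
  then show ?thesis
    using split all coarse zero_notin_cyc[of 4 "k + 2"] zero_notin_cyc[of "q + 1" k]
    by (auto simp: fq_line_def of_nat_diff)
qed

lemma diff_count_cyc_part_line_part:
  assumes "c < 4"
  shows "int (diff_count (cyc_part c) (line_part c) z + diff_count (line_part c) (cyc_part c) z) =
    (if z = 0 then int m * (8 * int m + 2)
     else int m * (6 * int m + 1) + int m * of_bool (z \<in> cyc \<omega> 4 (y + c + 2)) + 2 * int m * line_hits z c)"
proof -
  let ?R = "UNIV - {0} - cyc \<omega> 4 (y + c + 2)"
  have "diff_count (line_part c) (cyc_part c) z = diff_count (cyc_part (c + 4)) (line_part c) z"
    using diff_count_swap[of "line_part c" "cyc_part c" z] by (simp add: uminus_vimage_cyc_part uminus_vimage_line_part)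
  moreover have "cyc_part c \<union> cyc_part (c + 4) = ?R"
    using cyc_part_Un_shift[of c] by (simp add: ac_simps)
  ultimately have "diff_count (cyc_part c) (line_part c) z + diff_count (line_part c) (cyc_part c) z =
      diff_count ?R (line_part c) z"
    using diff_count_Un_left[OF cyc_part_disjoint_shift, of c "line_part c" z] by simp
  also have "\<dots> = (\<Sum>t<m. diff_count ?R (cyc \<omega> (q + 1) (y + c + 4 * t)) z)"
    using assms by (rule diff_count_line_part_right)
  finally have sum: "int (diff_count (cyc_part c) (line_part c) z + diff_count (line_part c) (cyc_part c) z) =
      (\<Sum>t<m. int (diff_count ?R (cyc \<omega> (q + 1) (y + c + 4 * t)) z))"
    by simp
  have "cyc \<omega> 4 (y + c + 4 * t + 2) = cyc \<omega> 4 (y + c + 2)" for t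
  proof (rule cyc_cong[OF four_dvd_n])
    have "(y + c + 4 * t + 2) mod 4 = (y + c + 2 + 4 * t) mod 4"
      by (simp only: ac_simps)
    also have "\<dots> = (y + c + 2) mod 4"
      by (rule mod_mult_self2)
    finally show "(y + c + 4 * t + 2) mod 4 = (y + c + 2) mod 4" .
  qed
  then have "int (diff_count ?R (cyc \<omega> (q + 1) (y + c + 4 * t)) z) =
      (if z = 0 then 8 * int m + 2
       else 6 * int m + 1 + of_bool (z \<in> cyc \<omega> 4 (y + c + 2))
         + 2 * int m * of_bool (z \<in> cyc \<omega> (q + 1) (y + c + 4 * t)))" for t
    using diff_count_complement_line[of "y + c + 4 * t" z] by simp
  then show ?thesis
    unfolding sum by (simp add: line_hits_def sum.distrib sum_distrib_left algebra_simps del: sum_of_bool_eq)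
qed

lemma sum_of_bool_cyc4:
  assumes "z \<noteq> 0"
  shows "(\<Sum>c<4. of_bool (z \<in> cyc \<omega> 4 (y + c + 2))) = (1 :: int)"
proof -
  have "card {c. c < 4 \<and> z \<in> cyc \<omega> 4 (c + (y + 2))} = 1"
    using card_mem_cyc_add[OF four_dvd_n assms] .
  then show ?thesis
    by (simp add: Int_def ac_simps)
qed

lemma UN_mod_cyc_line:
  "(\<Union>i\<in>{f t mod (q + 1) | t. t < m}. cyc \<omega> (q + 1) (i + a)) = (\<Union>t<m. cyc \<omega> (q + 1) (f t + a))"
proof -
  have "cyc \<omega> (q + 1) (f t mod (q + 1) + a) = cyc \<omega> (q + 1) (f t + a)" for t
    by (rule cyc_cong[OF q_plus_one_dvd_n]) (simp add: mod_add_left_eq)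
  then show ?thesis
    by auto
qed

lemma sum_cyc_part_line_part:
  "(\<Sum>c<4. int (diff_count (cyc_part c) (line_part c) z + diff_count (line_part c) (cyc_part c) z)) =
    (if z = 0 then 8 * int m * (4 * int m + 1)
     else int m * (24 * int m + 5) + 2 * int m * (\<Sum>c<4. line_hits z c))"
proof -
  have "(\<Sum>c<4. int (diff_count (cyc_part c) (line_part c) z + diff_count (line_part c) (cyc_part c) z)) =
      (\<Sum>c<4. if z = 0 then int m * (8 * int m + 2)
        else int m * (6 * int m + 1) + int m * of_bool (z \<in> cyc \<omega> 4 (y + c + 2)) + 2 * int m * line_hits z c)"
    by (intro sum.cong refl diff_count_cyc_part_line_part) simp
  also have "\<dots> = (if z = 0 then 4 * (int m * (8 * int m + 2))
      else 4 * (int m * (6 * int m + 1)) + int m * (\<Sum>c<4. of_bool (z \<in> cyc \<omega> 4 (y + c + 2)))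
        + 2 * int m * (\<Sum>c<4. line_hits z c))"
    by (simp add: sum.distrib sum_distrib_left del: sum_of_bool_eq)
  finally show ?thesis
    using sum_of_bool_cyc4 by (cases "z = 0") (simp_all add: algebra_simps del: sum_of_bool_eq)
qed

lemma sum_line_part_line_part:
  "int (diff_count (line_part 2) (line_part 0) z) + int (diff_count (line_part 0) (line_part 2) z)
    + int (diff_count (line_part 3) (line_part 1) z) + int (diff_count (line_part 1) (line_part 3) z) =
    (if z = 0 then 0 else 4 * int m * int m - 2 * int m * (\<Sum>c<4. line_hits z c))"
  by (simp add: diff_count_line_part_line_part sum_lessThan_4 algebra_simps)

lemma sum_cyc_part_cyc_part:
  "(\<Sum>h\<in>{0::nat, 1}. \<Sum>i\<in>I. \<Sum>j\<in>I.
      gr_mult (gr_set (cyc \<omega> 8 (i + h))) (gr_inv (gr_set (cyc \<omega> 8 (j + 2 + h)))) z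
    + gr_mult (gr_set (cyc \<omega> 8 (i + 2 + h))) (gr_inv (gr_set (cyc \<omega> 8 (j + h)))) z) =
    int (diff_count (cyc_part 0) (cyc_part 2) z) + int (diff_count (cyc_part 2) (cyc_part 0) z)
    + int (diff_count (cyc_part 1) (cyc_part 3) z) + int (diff_count (cyc_part 3) (cyc_part 1) z)"
proof -
  have pairs: "(\<Sum>i\<in>I. \<Sum>j\<in>I.
      gr_mult (gr_set (cyc \<omega> 8 (i + h))) (gr_inv (gr_set (cyc \<omega> 8 (j + 2 + h)))) z
    + gr_mult (gr_set (cyc \<omega> 8 (i + 2 + h))) (gr_inv (gr_set (cyc \<omega> 8 (j + h)))) z) =
    int (diff_count (cyc_part h) (cyc_part (2 + h)) z) + int (diff_count (cyc_part (2 + h)) (cyc_part h) z)"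
    for h
    by (simp add: gr_mult_gr_set_gr_inv sum.distrib diff_count_cyc_part_cyc_part add.assoc)
  have sum_01: "(\<Sum>h\<in>{0::nat, 1}. g h) = g 0 + g 1" for g :: "nat \<Rightarrow> int"
    by simp
  show ?thesis
    unfolding sum_01 pairs[of 0] pairs[of 1] by simp
qed

lemma difference_identity:
  assumes E0: "E0 = cyc_part 0 \<union> line_part 2" and E1: "E1 = cyc_part 2 \<union> line_part 0"
    and E2: "E2 = cyc_part 1 \<union> line_part 3" and E3: "E3 = cyc_part 3 \<union> line_part 1"
  shows "gr_mult (gr_set E0) (gr_inv (gr_set E1)) z + gr_mult (gr_set E1) (gr_inv (gr_set E0)) z
    + gr_mult (gr_set E2) (gr_inv (gr_set E3)) z + gr_mult (gr_set E3) (gr_inv (gr_set E2)) z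
    = (\<Sum>h\<in>{0::nat, 1}. \<Sum>i\<in>I. \<Sum>j\<in>I.
          gr_mult (gr_set (cyc \<omega> 8 (i + h))) (gr_inv (gr_set (cyc \<omega> 8 (j + 2 + h)))) z
        + gr_mult (gr_set (cyc \<omega> 8 (i + 2 + h))) (gr_inv (gr_set (cyc \<omega> 8 (j + h)))) z)
      + 8 * int m * (4 * int m + 1) * gr_set {0} z
      + int m * (28 * int m + 5) * gr_set (UNIV - {0}) z"
proof -
  have "cyc_part 0 \<inter> line_part 2 = {}" "cyc_part 2 \<inter> line_part 0 = {}"
    "cyc_part 1 \<inter> line_part 3 = {}" "cyc_part 3 \<inter> line_part 1 = {}"
    by (simp_all add: cyc_part_line_part_disjoint)
  then have "gr_mult (gr_set E0) (gr_inv (gr_set E1)) z + gr_mult (gr_set E1) (gr_inv (gr_set E0)) z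
    + gr_mult (gr_set E2) (gr_inv (gr_set E3)) z + gr_mult (gr_set E3) (gr_inv (gr_set E2)) z =
      (int (diff_count (cyc_part 0) (cyc_part 2) z) + int (diff_count (cyc_part 2) (cyc_part 0) z)
        + int (diff_count (cyc_part 1) (cyc_part 3) z) + int (diff_count (cyc_part 3) (cyc_part 1) z))
    + (\<Sum>c<4. int (diff_count (cyc_part c) (line_part c) z + diff_count (line_part c) (cyc_part c) z))
    + (int (diff_count (line_part 2) (line_part 0) z) + int (diff_count (line_part 0) (line_part 2) z)
        + int (diff_count (line_part 3) (line_part 1) z) + int (diff_count (line_part 1) (line_part 3) z))"
    by (simp add: gr_mult_gr_set_gr_inv E0 E1 E2 E3 diff_count_Un_Un sum_lessThan_4 algebra_simps)
  then show ?thesis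
    unfolding sum_cyc_part_cyc_part sum_cyc_part_line_part sum_line_part_line_part
    by (simp add: gr_set_def algebra_simps)
qed

end

theorem lemma3p3:
  fixes q m y :: nat and I :: "nat set" and \<omega> :: "'a::{finite,field}"
    and E0 E1 E2 E3 :: "'a set"
  assumes q_pp: "\<exists>p k. prime p \<and> k \<ge> 1 \<and> q = p ^ k"
    and q_def: "q = 8 * m + 3" and m_pos: "m \<ge> 1"
    and card_F: "card (UNIV :: 'a set) = q ^ 2"
    and prim: "primitive_elem \<omega>"
    and I_sub: "I \<subseteq> {0..7}" and I_card: "card I = 3"
    and I_disj: "I \<inter> {(x + 4) mod 8 | x. x \<in> I} = {}"
    and y_I: "y \<in> I" and y_par: "\<forall>x\<in>I - {y}. odd x \<noteq> odd y"
    and E0_def: "E0 = (\<Union>i\<in>I. cyc \<omega> 8 i) \<union>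
        (\<Union>i\<in>{(y + 2 + 4 * t) mod (q + 1) | t. t < m}. cyc \<omega> (q + 1) i)"
    and E1_def: "E1 = (\<Union>i\<in>I. cyc \<omega> 8 (i + 2)) \<union>
        (\<Union>i\<in>{(y + 4 * t) mod (q + 1) | t. t < m}. cyc \<omega> (q + 1) i)"
    and E2_def: "E2 = (\<Union>i\<in>I. cyc \<omega> 8 (i + 1)) \<union>
        (\<Union>i\<in>{(y + 2 + 4 * t) mod (q + 1) | t. t < m}. cyc \<omega> (q + 1) (i + 1))"
    and E3_def: "E3 = (\<Union>i\<in>I. cyc \<omega> 8 (i + 3)) \<union>
        (\<Union>i\<in>{(y + 4 * t) mod (q + 1) | t. t < m}. cyc \<omega> (q + 1) (i + 1))"
  shows "\<forall>z::'a.
      gr_mult (gr_set E0) (gr_inv (gr_set E1)) z + gr_mult (gr_set E1) (gr_inv (gr_set E0)) z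
    + gr_mult (gr_set E2) (gr_inv (gr_set E3)) z + gr_mult (gr_set E3) (gr_inv (gr_set E2)) z
    = (\<Sum>h\<in>{0::nat, 1}. \<Sum>i\<in>I. \<Sum>j\<in>I.
          gr_mult (gr_set (cyc \<omega> 8 (i + h))) (gr_inv (gr_set (cyc \<omega> 8 (j + 2 + h)))) z
        + gr_mult (gr_set (cyc \<omega> 8 (i + 2 + h))) (gr_inv (gr_set (cyc \<omega> 8 (j + h)))) z)
      + 8 * int m * (4 * int m + 1) * gr_set {0} z
      + int m * (28 * int m + 5) * gr_set (UNIV - {0}) z"
proof -
  have "card (UNIV :: 'a set) = Suc (q\<^sup>2 - 1)"
    using card_F q_def by simp
  then interpret q3mod8_setting \<omega> "q\<^sup>2 - 1" q I y m
    using q_pp q_def card_F prim I_sub I_card I_disj y_I y_par by unfold_locales simp_all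
  have "E0 = cyc_part 0 \<union> line_part 2" and "E1 = cyc_part 2 \<union> line_part 0"
    using UN_mod_cyc_line[where f = "\<lambda>t. y + 2 + 4 * t" and a = 0]
      UN_mod_cyc_line[where f = "\<lambda>t. y + 4 * t" and a = 0]
    by (simp_all add: E0_def E1_def cyc_part_def line_part_def)
  moreover have "E2 = cyc_part 1 \<union> line_part 3" and "E3 = cyc_part 3 \<union> line_part 1"
  proof -
    have shift: "y + 2 + 4 * t + 1 = y + 3 + 4 * t" "y + 4 * t + 1 = y + 1 + 4 * t" for t
      by simp_all
    show "E2 = cyc_part 1 \<union> line_part 3" and "E3 = cyc_part 3 \<union> line_part 1"
      unfolding E2_def E3_def UN_mod_cyc_line shift cyc_part_def line_part_def by simp_all
  qed
  ultimately show ?thesis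
    using difference_identity by blast
qed

end
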